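(* Let $Q_1,Q_2,f_1,f_2,\mathcal{A},M,d_{Q_1},d_{Q_2},\mu$ be as in the context, fix $T\in\mathbb{N}_0$, and let the sequences $(x_t)_{t=0}^{T+1}$, $(u_t)_{t=0}^{T+1}$, $(z_t)_{t=0}^{T}$, $(\hat x_t)_{t=1}^{T+1}$, $(L_t)_{t=0}^{T}$ be generated by the algorithm described in the context with smoothness parameter $\mu>0$. Set \[ \bar x:=u_T\in Q_1,\qquad \bar y:=\sum_{t=0}^T\frac{2(t+1)}{(T+1)(T+2)}\,y_*(x_t)\in Q_2 . \] Then \[ \overline{\phi}(\bar x)-\underline{\phi}(\bar y)\le\frac{4\big(D_1\|\mathcal{A}\|^2/\mu+D_1M-\chi_T\big)}{(T+1)^2}+\mu D_2, \] where $\chi_T:=\sum_{t=0}^{T-1}(L_{t+1}-L_t)\big(d_{Q_1}(z_{t+1})-\tfrac12\|z_t-\hat x_{t+1}\|_{\mathbb{R}^n}^2\big)$, $D_1:=\max_{x\in Q_1}d_{Q_1}(x)$ and $D_2:=\max_{y\in Q_2}d_{Q_2}(y)$.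
   Context: $\mathbb{R}^n$ and $\mathbb{R}^m$ carry the standard scalar product $\langle\cdot,\cdot\rangle$ and norms $\|\cdot\|_{\mathbb{R}^n}$, $\|\cdot\|_{\mathbb{R}^m}$ (possibly not Euclidean). $Q_1\subset\mathbb{R}^n$, $Q_2\subset\mathbb{R}^m$ are compact convex. $f_1:\mathbb{R}^n\to\mathbb{R}$ and $f_2:\mathbb{R}^m\to\mathbb{R}$ are smooth convex functions, with $\nabla f_1$ Lipschitz continuous with constant $M>0$ (w.r.t. $\|\cdot\|_{\mathbb{R}^n}$ and its dual norm). $\mathcal{A}:\mathbb{R}^n\to\mathbb{R}^m$ is linear, $\|\mathcal{A}\|:=\max\{\langle\mathcal{A}x,y\rangle:\|x\|_{\mathbb{R}^n}=1,\|y\|_{\mathbb{R}^m}=1\}$, and $\mathcal{A}^*$ is its adjoint. Let $\phi(x,y)=f_1(x)+\langle\mathcal{A}x,y\rangle-f_2(y)$, $\overline{\phi}(x)=\max_{y\in Q_2}\phi(x,y)$, $\underline{\phi}(y)=\min_{x\in Q_1}\phi(x,y)$. A distance-generating function for a closed convex set $Q$ (in a normed space) is $d_Q:Q\to\mathbb{R}_{\ge0}$ that is continuous, strongly convex with modulus 1 w.r.t. the norm, and whose subdifferential admits a continuous selection $d_Q'$ on $Q^o=\{x\in Q:\partial d_Q(x)\ne\emptyset\}$; $V_z(x)=d_Q(x)-d_Q(z)-\langle d_Q'(z),x-z\rangle$, $\mathrm{Prox}_{Q,z}(s)=\arg\min_{x\in Q}\{\langle s,x-z\rangle+V_z(x)\}$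 for $z\in Q^o$, and $c(d_Q)=\arg\min_Q d_Q$, with $d_Q(c(d_Q))=0$ assumed. Let $d_{Q_1},d_{Q_2}$ be distance-generating functions for $Q_1,Q_2$. For $\mu>0$ set $\overline{\phi}_\mu(x)=\max_{y\in Q_2}\{f_1(x)+\langle\mathcal{A}x,y\rangle-f_2(y)-\mu d_{Q_2}(y)\}$ and let $y_*(x)$ be the unique maximizer. Then $\overline{\phi}_\mu$ is convex and differentiable with $\nabla\overline{\phi}_\mu(x)=\nabla f_1(x)+\mathcal{A}^*y_*(x)$, Lipschitz with constant $L_\mu:=M+\|\mathcal{A}\|^2/\mu$. Algorithm: set $L_0=L_\mu$, $x_0=c(d_{Q_1})$, $u_0=\arg\min_{x\in Q_1}\{\frac12(\overline{\phi}_\mu(x_0)+\langle\nabla\overline{\phi}_\mu(x_0),x-x_0\rangle)+L_0d_{Q_1}(x)\}$, $z_0=u_0$, $\tau_0=2/3$, $x_1=\tau_0z_0+(1-\tau_0)u_0$, $\hat x_1=\mathrm{Prox}_{Q_1,z_0}(\nabla\overline{\phi}_\mu(x_1)/L_0)$, $u_1=\tau_0\hat x_1+(1-\tau_0)u_0$. For $t=1,\dots,T$: choose $0<L_t\le L_\mu$ with $\overline{\phi}_\mu(u_t)\le\overline{\phi}_\mu(x_t)+\langle\nabla\overline{\phi}_\mu(x_t),u_t-x_t\rangle+\frac{L_t}{2}\|u_t-x_t\|_{\mathbb{R}^n}^2$; set $z_t=\arg\min_{x\in Q_1}\{\sum_{k=0}^t\frac{k+1}{2}(\overline{\phi}_\mu(x_k)+\langle\nabla\overline{\phi}_\mu(x_k),x-x_k\rangle)+L_td_{Q_1}(x)\}$;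 set $\tau_t=\frac{2}{t+3}$, $x_{t+1}=\tau_tz_t+(1-\tau_t)u_t$, $\hat x_{t+1}=\mathrm{Prox}_{Q_1,z_t}(\frac{t+2}{2}\nabla\overline{\phi}_\mu(x_{t+1})/L_t)$, $u_{t+1}=\tau_t\hat x_{t+1}+(1-\tau_t)u_t$. *)

theory Defs
  imports "HOL-Analysis.Analysis"
begin

definition is_norm :: "('a::real_vector \<Rightarrow> real) \<Rightarrow> bool" where
  "is_norm N \<longleftrightarrow> (\<forall>x. 0 \<le> N x) \<and> (\<forall>x. N x = 0 \<longleftrightarrow> x = 0)
     \<and> (\<forall>c x. N (c *\<^sub>R x) = \<bar>c\<bar> * N x) \<and> (\<forall>x y. N (x + y) \<le> N x + N y)"

definition dual_norm :: "('a::real_inner \<Rightarrow> real) \<Rightarrow> 'a \<Rightarrow> real" where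
  "dual_norm N s = Sup {s \<bullet> x | x. N x \<le> 1}"

definition op_norm :: "('a::real_inner \<Rightarrow> real) \<Rightarrow> ('b::real_inner \<Rightarrow> real) \<Rightarrow> ('a \<Rightarrow> 'b) \<Rightarrow> real" where
  "op_norm N1 N2 A = Sup {A x \<bullet> y | x y. N1 x = 1 \<and> N2 y = 1}"

definition strongly_convex_on1 :: "'a::real_vector set \<Rightarrow> ('a \<Rightarrow> real) \<Rightarrow> ('a \<Rightarrow> real) \<Rightarrow> bool" where
  "strongly_convex_on1 Q N d \<longleftrightarrow> (\<forall>x\<in>Q. \<forall>y\<in>Q. \<forall>l::real. 0 \<le> l \<and> l \<le> 1 \<longrightarrow>
     d (l *\<^sub>R x + (1 - l) *\<^sub>R y) \<le> l * d x + (1 - l) * d y - 1/2 * l * (1 - l) * (N (x - y))^2)"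

text \<open>Subgradient of d (a function on Q, extended by +infinity outside Q) at x.\<close>
definition subgrad_on :: "'a::real_inner set \<Rightarrow> ('a \<Rightarrow> real) \<Rightarrow> 'a \<Rightarrow> 'a \<Rightarrow> bool" where
  "subgrad_on Q d x s \<longleftrightarrow> (\<forall>y\<in>Q. d x + s \<bullet> (y - x) \<le> d y)"

definition dom_subdiff :: "'a::real_inner set \<Rightarrow> ('a \<Rightarrow> real) \<Rightarrow> 'a set" where
  "dom_subdiff Q d = {x \<in> Q. \<exists>s. subgrad_on Q d x s}"

text \<open>Distance-generating function d for Q with continuous subgradient selection d',
  including the standing assumption that \<open>d\<close> attains the value 0 on Q (d(c(d)) = 0).\<close>
definition dgf :: "'a::real_inner set \<Rightarrow> ('a \<Rightarrow> real) \<Rightarrow> ('a \<Rightarrow> real) \<Rightarrow> ('a \<Rightarrow> 'a) \<Rightarrow> bool" where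
  "dgf Q N d d' \<longleftrightarrow> (\<forall>x\<in>Q. 0 \<le> d x) \<and> continuous_on Q d \<and> strongly_convex_on1 Q N d
     \<and> (\<forall>x\<in>dom_subdiff Q d. subgrad_on Q d x (d' x)) \<and> continuous_on (dom_subdiff Q d) d'
     \<and> (\<exists>c\<in>Q. d c = 0)"

definition bregman :: "('a::real_inner \<Rightarrow> real) \<Rightarrow> ('a \<Rightarrow> 'a) \<Rightarrow> 'a \<Rightarrow> 'a \<Rightarrow> real" where
  "bregman d d' z x = d x - d z - d' z \<bullet> (x - z)"

definition is_argmin_on :: "'a set \<Rightarrow> ('a \<Rightarrow> real) \<Rightarrow> 'a \<Rightarrow> bool" where
  "is_argmin_on Q F z \<longleftrightarrow> z \<in> Q \<and> (\<forall>v\<in>Q. F z \<le> F v)"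

definition phi :: "('a::real_inner \<Rightarrow> real) \<Rightarrow> ('b::real_inner \<Rightarrow> real) \<Rightarrow> ('a \<Rightarrow> 'b) \<Rightarrow> 'a \<Rightarrow> 'b \<Rightarrow> real" where
  "phi f1 f2 A x y = f1 x + A x \<bullet> y - f2 y"

definition phibar :: "('a::real_inner \<Rightarrow> real) \<Rightarrow> ('b::real_inner \<Rightarrow> real) \<Rightarrow> ('a \<Rightarrow> 'b) \<Rightarrow> 'b set \<Rightarrow> 'a \<Rightarrow> real" where
  "phibar f1 f2 A Q2 x = Sup ((\<lambda>y. phi f1 f2 A x y) ` Q2)"

definition phiunder :: "('a::real_inner \<Rightarrow> real) \<Rightarrow> ('b::real_inner \<Rightarrow> real) \<Rightarrow> ('a \<Rightarrow> 'b) \<Rightarrow> 'a set \<Rightarrow> 'b \<Rightarrow> real" where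
  "phiunder f1 f2 A Q1 y = Inf ((\<lambda>x. phi f1 f2 A x y) ` Q1)"

definition phimu :: "('a::real_inner \<Rightarrow> real) \<Rightarrow> ('b::real_inner \<Rightarrow> real) \<Rightarrow> ('a \<Rightarrow> 'b) \<Rightarrow> ('b \<Rightarrow> real) \<Rightarrow> 'b set \<Rightarrow> real \<Rightarrow> 'a \<Rightarrow> real" where
  "phimu f1 f2 A d2 Q2 \<mu> x = Sup ((\<lambda>y. phi f1 f2 A x y - \<mu> * d2 y) ` Q2)"

end

theory Submission
  imports Defs
begin

text \<open>Nesterov's estimate-sequence argument. The smoothed function \<open>phimu\<close> is convex, its
  gradient is Lipschitz with constant \<open>M + \<parallel>A\<parallel>\<^sup>2/\<mu>\<close>, and its linearisation at \<open>x k\<close> lies below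
  \<open>phi v (ystar (x k))\<close>. The estimate function \<open>\<psi>\<^sub>t\<close>, the weighted sum of these linearisations
  plus \<open>L t\<close> times \<open>d\<^sub>1\<close>, is minimised by \<open>z t\<close>, and by induction
  \<open>(t+1)(t+2)/4 \<cdot> phimu (u t) \<le> \<psi>\<^sub>t (z t) - \<chi>\<^sub>t\<close>: the step combines the quadratic upper bound at
  \<open>u (t+1)\<close>, the prox step defining \<open>xh (t+1)\<close> and the three-point property of the Bregman
  distance at \<open>z t\<close>, while \<open>\<chi>\<^sub>t\<close> absorbs the changes of \<open>L t\<close>. Since \<open>\<psi>\<^sub>T (z T) \<le> \<psi>\<^sub>T v\<close> for all
  \<open>v\<close> and \<open>phi\<close> is concave in \<open>y\<close>, this bounds \<open>phiunder\<close> at the averaged dual point from below;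
  replacing \<open>phimu\<close> by \<open>phibar\<close> costs \<open>\<mu> D\<^sub>2\<close>.\<close>

section \<open>Norms on a finite-dimensional space\<close>

lemma is_norm_nonneg: "is_norm N \<Longrightarrow> 0 \<le> N x"
  unfolding is_norm_def by auto

lemma is_norm_eq_0_iff: "is_norm N \<Longrightarrow> N x = 0 \<longleftrightarrow> x = 0"
  unfolding is_norm_def by auto

lemma is_norm_scaleR: "is_norm N \<Longrightarrow> N (c *\<^sub>R x) = \<bar>c\<bar> * N x"
  unfolding is_norm_def by auto

lemma is_norm_triangle: "is_norm N \<Longrightarrow> N (x + y) \<le> N x + N y"
  unfolding is_norm_def by auto

lemma is_norm_zero: "is_norm N \<Longrightarrow> N 0 = 0"
  using is_norm_eq_0_iff by blast

lemma is_norm_pos: "is_norm N \<Longrightarrow> x \<noteq> 0 \<Longrightarrow> 0 < N x"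
  using is_norm_nonneg is_norm_eq_0_iff by (metis order_le_less)

lemma is_norm_minus_commute: "is_norm N \<Longrightarrow> N (x - y) = N (y - x)"
  using is_norm_scaleR[of N "-1" "x - y"] by simp

lemma is_norm_normalize: "is_norm N \<Longrightarrow> x \<noteq> 0 \<Longrightarrow> N ((1 / N x) *\<^sub>R x) = 1"
  using is_norm_pos[of N x] by (simp add: is_norm_scaleR)

lemma convex_on_is_norm: "is_norm N \<Longrightarrow> convex_on UNIV N"
  by (rule convex_onI) (auto intro: order_trans[OF is_norm_triangle] simp: is_norm_scaleR)

lemma continuous_on_is_norm:
  fixes N :: "'a::euclidean_space \<Rightarrow> real"
  shows "is_norm N \<Longrightarrow> continuous_on S N"
  by (metis continuous_on_subset convex_on_continuous convex_on_is_norm open_UNIV top_greatest)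

lemma is_norm_ge_norm:
  fixes N :: "'a::euclidean_space \<Rightarrow> real"
  assumes N: "is_norm N"
  obtains c where "0 < c" "\<And>x. c * norm x \<le> N x"
proof -
  have "sphere (0::'a) 1 \<noteq> {}"
    using SOME_Basis norm_Basis by fastforce
  then obtain x0 where x0: "x0 \<in> sphere 0 1" "\<And>y. y \<in> sphere 0 1 \<Longrightarrow> N x0 \<le> N y"
    using continuous_attains_inf[OF compact_sphere _ continuous_on_is_norm[OF N]] by blast
  have "0 < N x0"
    using x0(1) is_norm_pos[OF N, of x0] by force
  moreover have "N x0 * norm x \<le> N x" for x
  proof (cases "x = 0")
    case False
    then have "N x0 \<le> N ((1 / norm x) *\<^sub>R x)"
      by (intro x0(2)) simp
    with False show ?thesis
      by (simp add: is_norm_scaleR[OF N] field_simps)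
  qed (simp add: is_norm_nonneg[OF N])
  ultimately show thesis
    using that by blast
qed

lemma is_norm_le_1_imp_norm_le:
  fixes N :: "'a::euclidean_space \<Rightarrow> real"
  assumes "is_norm N"
  obtains R where "\<And>x. N x \<le> 1 \<Longrightarrow> norm x \<le> R"
proof -
  obtain c where c: "0 < c" "\<And>x. c * norm x \<le> N x"
    using is_norm_ge_norm[OF assms] by blast
  have "norm x \<le> 1 / c" if "N x \<le> 1" for x
    using c(1) c(2)[of x] that by (simp add: field_simps)
  then show thesis
    using that by blast
qed

lemma inner_le_dual_norm:
  fixes N :: "'a::euclidean_space \<Rightarrow> real"
  assumes N: "is_norm N"
  shows "s \<bullet> h \<le> dual_norm N s * N h"
proof -
  obtain R where R: "\<And>x. N x \<le> 1 \<Longrightarrow> norm x \<le> R"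
    using is_norm_le_1_imp_norm_le[OF N] by blast
  have "bdd_above {s \<bullet> x | x. N x \<le> 1}"
    by (rule bdd_aboveI[of _ "norm s * R"])
      (auto intro!: order_trans[OF norm_cauchy_schwarz] mult_left_mono R)
  then have unit: "s \<bullet> x \<le> dual_norm N s" if "N x \<le> 1" for x
    unfolding dual_norm_def using that by (intro cSup_upper) auto
  show ?thesis
  proof (cases "h = 0")
    case False
    with unit[of "(1 / N h) *\<^sub>R h"] is_norm_pos[OF N] show ?thesis
      by (simp add: is_norm_normalize[OF N] field_simps)
  qed (simp add: is_norm_zero[OF N])
qed

lemma inner_le_op_norm:
  fixes N1 :: "'a::euclidean_space \<Rightarrow> real" and N2 :: "'b::euclidean_space \<Rightarrow> real"
  assumes N1: "is_norm N1" and N2: "is_norm N2" and A: "linear A"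
  shows "A h \<bullet> y \<le> op_norm N1 N2 A * N1 h * N2 y"
proof -
  obtain R1 where R1: "\<And>x. N1 x \<le> 1 \<Longrightarrow> norm x \<le> R1"
    using is_norm_le_1_imp_norm_le[OF N1] by blast
  obtain R2 where R2: "\<And>x. N2 x \<le> 1 \<Longrightarrow> norm x \<le> R2"
    using is_norm_le_1_imp_norm_le[OF N2] by blast
  obtain B where B: "0 < B" "\<And>x. norm (A x) \<le> B * norm x"
    using linear_bounded_pos[OF A] by blast
  have "A x \<bullet> y' \<le> B * R1 * R2" if "N1 x = 1" "N2 y' = 1" for x y'
  proof -
    have "A x \<bullet> y' \<le> B * norm x * norm y'"
      using norm_cauchy_schwarz B(2)[of x] by (meson mult_right_mono norm_ge_zero order_trans)
    also have "\<dots> \<le> B * R1 * R2"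
      using B(1) R1[of x] R2[of y'] that order_trans[OF norm_ge_zero R1[of x]]
      by (intro mult_mono) auto
    finally show ?thesis .
  qed
  then have "bdd_above {A x \<bullet> y' | x y'. N1 x = 1 \<and> N2 y' = 1}"
    by (intro bdd_aboveI[of _ "B * R1 * R2"]) auto
  then have unit: "A x \<bullet> y' \<le> op_norm N1 N2 A" if "N1 x = 1" "N2 y' = 1" for x y'
    unfolding op_norm_def using that by (intro cSup_upper) auto
  show ?thesis
  proof (cases "h = 0 \<or> y = 0")
    case False
    then have "A ((1 / N1 h) *\<^sub>R h) \<bullet> ((1 / N2 y) *\<^sub>R y) \<le> op_norm N1 N2 A"
      by (intro unit is_norm_normalize N1 N2) auto
    with False is_norm_pos[OF N1, of h] is_norm_pos[OF N2, of y] show ?thesis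
      by (simp add: linear_cmul[OF A] field_simps)
  qed (auto simp: linear_0[OF A] is_norm_zero[OF N1] is_norm_zero[OF N2])
qed

section \<open>Convex and smooth functions\<close>

lemma le_if_le_minus_small:
  fixes a b c :: real
  assumes "\<And>l. 0 < l \<Longrightarrow> l \<le> 1 \<Longrightarrow> b - l * c \<le> a" and "0 \<le> c"
  shows "b \<le> a"
proof (rule field_le_epsilon)
  fix e :: real assume "0 < e"
  define l where "l = min 1 (e / (c + 1))"
  have l: "0 < l" "l \<le> 1"
    using \<open>0 < e\<close> \<open>0 \<le> c\<close> by (auto simp: l_def)
  have "l * c \<le> e / (c + 1) * c"
    using \<open>0 \<le> c\<close> by (intro mult_right_mono) (auto simp: l_def)
  also have "\<dots> \<le> e"
    using \<open>0 < e\<close> \<open>0 \<le> c\<close> by (simp add: field_simps)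
  finally show "b \<le> a + e"
    using assms(1)[OF l] by linarith
qed

lemma convex_on_inner_plus_const: "convex Q \<Longrightarrow> convex_on Q (\<lambda>v. c \<bullet> v + k)"
  by (rule convex_onI) (auto simp: inner_add_right algebra_simps)

lemma strongly_convex_on1_imp_convex_on:
  fixes d :: "'a::real_vector \<Rightarrow> real"
  assumes "convex Q" and "strongly_convex_on1 Q N d"
  shows "convex_on Q d"
proof (rule convex_onI)
  fix t :: real and x y assume "0 < t" "t < 1" "x \<in> Q" "y \<in> Q"
  then have "d (t *\<^sub>R y + (1 - t) *\<^sub>R x) \<le> t * d y + (1 - t) * d x - 1/2 * t * (1 - t) * (N (y - x))^2"
    using assms(2) unfolding strongly_convex_on1_def by auto
  moreover have "0 \<le> 1/2 * t * (1 - t) * (N (y - x))^2"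
    using \<open>0 < t\<close> \<open>t < 1\<close> by simp
  ultimately show "d ((1 - t) *\<^sub>R x + t *\<^sub>R y) \<le> (1 - t) * d x + t * d y"
    by (simp add: add.commute)
qed (fact assms(1))

lemma strongly_convex_argmin_growth:
  fixes G d :: "'a::real_vector \<Rightarrow> real"
  assumes Q: "convex Q" and G: "convex_on Q G" and d: "strongly_convex_on1 Q N d" and m: "0 \<le> m"
    and z: "is_argmin_on Q (\<lambda>w. G w + m * d w) z" and v: "v \<in> Q"
  shows "G z + m * d z + m / 2 * (N (v - z))^2 \<le> G v + m * d v"
proof (rule le_if_le_minus_small)
  let ?F = "\<lambda>w. G w + m * d w" and ?K = "(N (v - z))^2"
  show "0 \<le> m / 2 * ?K"
    using m by simp
  fix l :: real assume l: "0 < l" "l \<le> 1"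
  let ?w = "l *\<^sub>R v + (1 - l) *\<^sub>R z"
  have zQ: "z \<in> Q"
    using z unfolding is_argmin_on_def by simp
  have "G ?w \<le> l * G v + (1 - l) * G z"
    using convex_onD[OF G, of l z v] l v zQ by (simp add: add.commute)
  moreover have "d ?w \<le> l * d v + (1 - l) * d z - 1/2 * l * (1 - l) * ?K"
    using d v zQ l unfolding strongly_convex_on1_def by auto
  moreover have "?F z \<le> ?F ?w"
    using z Q v zQ l unfolding is_argmin_on_def convex_def by auto
  ultimately have "?F z \<le> l * ?F v + (1 - l) * ?F z - m/2 * l * (1 - l) * ?K"
    using mult_left_mono[OF _ m] by (fastforce simp: algebra_simps)
  then have "l * (?F z + m / 2 * ?K - l * (m / 2 * ?K)) \<le> l * ?F v"
    by (simp add: algebra_simps diff_divide_distrib add_divide_distrib)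
  then show "?F z + m / 2 * ?K - l * (m / 2 * ?K) \<le> ?F v"
    using l by simp
qed

lemma has_real_derivative_along_line:
  assumes "\<And>v. (f has_derivative (\<lambda>k. D v \<bullet> k)) (at v)"
  shows "((\<lambda>t. f (x + t *\<^sub>R h)) has_real_derivative (D (x + t *\<^sub>R h) \<bullet> h)) (at t)"
proof -
  have "((\<lambda>t. x + t *\<^sub>R h) has_derivative (\<lambda>t. t *\<^sub>R h)) (at t)"
    by (auto intro!: derivative_eq_intros)
  from has_derivative_compose[OF this assms]
  have "((\<lambda>t. f (x + t *\<^sub>R h)) has_derivative (\<lambda>s. D (x + t *\<^sub>R h) \<bullet> (s *\<^sub>R h))) (at t)" .
  moreover have "(\<lambda>s. D (x + t *\<^sub>R h) \<bullet> (s *\<^sub>R h)) = (*) (D (x + t *\<^sub>R h) \<bullet> h)"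
    by (auto simp: fun_eq_iff)
  ultimately show ?thesis
    by (simp add: has_field_derivative_def)
qed

lemma convex_on_gradient_ineq:
  fixes f :: "'a::real_inner \<Rightarrow> real"
  assumes cvx: "convex_on UNIV f" and der: "\<And>v. (f has_derivative (\<lambda>k. D v \<bullet> k)) (at v)"
  shows "f w + D w \<bullet> (v - w) \<le> f v"
proof -
  let ?p = "\<lambda>t::real. f (w + t *\<^sub>R (v - w))"
  have "convex_on UNIV ?p"
  proof (rule convex_onI)
    fix t x y :: real
    have "w + ((1 - t) *\<^sub>R x + t *\<^sub>R y) *\<^sub>R (v - w)
        = (1 - t) *\<^sub>R (w + x *\<^sub>R (v - w)) + t *\<^sub>R (w + y *\<^sub>R (v - w))"
      by (simp add: algebra_simps)
    moreover assume "0 < t" "t < 1"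
    ultimately show "?p ((1 - t) *\<^sub>R x + t *\<^sub>R y) \<le> (1 - t) * ?p x + t * ?p y"
      using convex_onD[OF cvx, of t] by simp
  qed simp
  moreover have "(?p has_real_derivative (D w \<bullet> (v - w))) (at 0)"
    using has_real_derivative_along_line[OF der, of w "v - w" 0] by simp
  ultimately have "D w \<bullet> (v - w) * (1 - 0) \<le> ?p 1 - ?p 0"
    by (intro convex_on_imp_above_tangent) auto
  then show ?thesis
    by simp
qed

lemma lipschitz_gradient_descent_ineq:
  fixes f :: "'a::euclidean_space \<Rightarrow> real"
  assumes N: "is_norm N" and der: "\<And>v. (f has_derivative (\<lambda>k. D v \<bullet> k)) (at v)"
    and lip: "\<And>v w. dual_norm N (D v - D w) \<le> M * N (v - w)"
  shows "f u \<le> f x + D x \<bullet> (u - x) + M / 2 * (N (u - x))^2"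
proof -
  let ?h = "u - x"
  define p where "p t = f (x + t *\<^sub>R ?h) - t * (D x \<bullet> ?h) - M / 2 * t^2 * (N ?h)^2" for t
  have p': "(p has_real_derivative (D (x + t *\<^sub>R ?h) \<bullet> ?h - D x \<bullet> ?h - M * t * (N ?h)^2)) (at t)"
    for t
    unfolding p_def by (rule derivative_eq_intros has_real_derivative_along_line[OF der] | simp)+
  have slope: "(D (x + t *\<^sub>R ?h) - D x) \<bullet> ?h \<le> M * t * (N ?h)^2" if "0 \<le> t" for t
  proof -
    have "(D (x + t *\<^sub>R ?h) - D x) \<bullet> ?h \<le> dual_norm N (D (x + t *\<^sub>R ?h) - D x) * N ?h"
      by (rule inner_le_dual_norm[OF N])
    also have "\<dots> \<le> M * N (t *\<^sub>R ?h) * N ?h"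
      using lip[of "x + t *\<^sub>R ?h" x] is_norm_nonneg[OF N] by (simp add: mult_right_mono)
    finally show ?thesis
      using that by (simp add: is_norm_scaleR[OF N] power2_eq_square mult_ac)
  qed
  have "p 1 \<le> p 0"
  proof (rule DERIV_nonpos_imp_nonincreasing[of 0 1 p])
    fix t :: real assume "0 \<le> t" "t \<le> 1"
    with p'[of t] slope[of t] show "\<exists>y. DERIV p t :> y \<and> y \<le> 0"
      by (auto simp: inner_diff_left)
  qed simp
  then show ?thesis
    by (simp add: p_def)
qed

section \<open>Distance-generating functions\<close>

lemma norm_convex_comb_sq:
  fixes a b :: "'a::real_inner"
  shows "(norm (l *\<^sub>R a + (1 - l) *\<^sub>R b))^2
    = l * (norm a)^2 + (1 - l) * (norm b)^2 - l * (1 - l) * (norm (a - b))^2"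
  by (simp add: power2_norm_eq_inner inner_add_left inner_add_right inner_diff_left
      inner_diff_right inner_commute algebra_simps)

lemma strongly_convex_on1_half_sq_dist:
  fixes p :: "'a::real_inner"
  shows "strongly_convex_on1 Q norm (\<lambda>x. 1/2 * (norm (x - p))^2)"
  unfolding strongly_convex_on1_def
proof (intro ballI allI impI)
  fix x y :: 'a and l :: real
  have "l *\<^sub>R x + (1 - l) *\<^sub>R y - p = l *\<^sub>R (x - p) + (1 - l) *\<^sub>R (y - p)"
    by (simp add: algebra_simps)
  then show "1/2 * (norm (l *\<^sub>R x + (1 - l) *\<^sub>R y - p))^2
      \<le> l * (1/2 * (norm (x - p))^2) + (1 - l) * (1/2 * (norm (y - p))^2)
         - 1/2 * l * (1 - l) * (norm (x - y))^2"
    using norm_convex_comb_sq[of l "x - p" "y - p"] by (simp add: field_simps)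
qed

lemma argmin_plus_sq_dist_subgrad:
  fixes d :: "'a::real_inner \<Rightarrow> real"
  assumes Q: "convex Q" and cvx: "convex_on Q d" and K: "0 \<le> K"
    and w: "is_argmin_on Q (\<lambda>v. d v + K * (1/2 * (norm (v - p))^2)) w"
  shows "subgrad_on Q d w (K *\<^sub>R (p - w))"
  unfolding subgrad_on_def
proof
  fix v assume v: "v \<in> Q"
  have "v - p = (v - w) + (w - p)"
    by simp
  then have "(norm (v - p))^2 = (norm (v - w))^2 + 2 * ((v - w) \<bullet> (w - p)) + (norm (w - p))^2"
    by (metis (no_types) power2_norm_eq_inner inner_add_left inner_add_right inner_commute
        mult_2 add.assoc)
  with strongly_convex_argmin_growth[OF Q cvx strongly_convex_on1_half_sq_dist K w v]
  show "d w + K *\<^sub>R (p - w) \<bullet> (v - w) \<le> d v"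
    using K by (simp add: inner_diff_left inner_commute algebra_simps)
qed

text \<open>The proximal point \<open>w\<close> minimising \<open>d + K/2 \<parallel>\<cdot> - p\<parallel>\<^sup>2\<close> lies in \<open>Q\<^sup>o\<close> and is close to \<open>p\<close>
  for large \<open>K\<close>.\<close>
lemma dom_subdiff_approx:
  fixes d :: "'a::euclidean_space \<Rightarrow> real"
  assumes Q: "compact Q" "convex Q" and cont: "continuous_on Q d" and cvx: "convex_on Q d"
    and p: "p \<in> Q" and \<delta>: "0 < \<delta>"
  obtains w where "w \<in> dom_subdiff Q d" "norm (w - p) < \<delta>"
proof -
  obtain B where B: "0 < B" "\<And>w. w \<in> Q \<Longrightarrow> \<bar>d w\<bar> \<le> B"
    using compact_imp_bounded[OF compact_continuous_image[OF cont Q(1)]]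
    unfolding bounded_pos by auto
  define K where "K = 8 * B / \<delta>^2"
  have K: "0 < K"
    using B \<delta> by (simp add: K_def)
  let ?h = "\<lambda>x. 1/2 * (norm (x - p))^2"
  have "continuous_on Q (\<lambda>w. d w + K * ?h w)"
    by (intro continuous_intros cont)
  then obtain w where w: "is_argmin_on Q (\<lambda>w. d w + K * ?h w) w"
    using continuous_attains_inf[OF Q(1)] p unfolding is_argmin_on_def by blast
  then have wQ: "w \<in> Q"
    unfolding is_argmin_on_def by simp
  have "K * (norm (w - p))^2 \<le> d p - d w"
    using strongly_convex_argmin_growth[OF Q(2) cvx strongly_convex_on1_half_sq_dist _ w p] K
    by (simp add: norm_minus_commute)
  also have "\<dots> \<le> 2 * B"
    using B(2)[OF p] B(2)[OF wQ] by linarith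
  finally have "4 * (norm (w - p))^2 \<le> \<delta>^2"
    using K B \<delta> by (simp add: K_def field_simps)
  moreover have "0 < \<delta>^2"
    using \<delta> by simp
  ultimately have "(norm (w - p))^2 < \<delta>^2"
    by linarith
  then have "norm (w - p) < \<delta>"
    using \<delta> by (simp add: power_less_imp_less_base)
  moreover have "subgrad_on Q d w (K *\<^sub>R (p - w))"
    using argmin_plus_sq_dist_subgrad[OF Q(2) cvx _ w] K by simp
  ultimately show thesis
    using that wQ unfolding dom_subdiff_def by blast
qed

lemma argmin_inner_plus_scaled_in_dom_subdiff:
  assumes L: "0 < L" and z: "is_argmin_on Q (\<lambda>v. c \<bullet> v + L * d v) z"
  shows "z \<in> dom_subdiff Q d"
proof -
  have "subgrad_on Q d z (- (1 / L) *\<^sub>R c)"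
    unfolding subgrad_on_def
  proof
    fix v assume "v \<in> Q"
    with z have "L * (d z + (- (1 / L) *\<^sub>R c) \<bullet> (v - z)) \<le> L * d v"
      using L unfolding is_argmin_on_def by (auto simp: algebra_simps inner_diff_right)
    with L show "d z + (- (1 / L) *\<^sub>R c) \<bullet> (v - z) \<le> d v"
      by simp
  qed
  with z show ?thesis
    unfolding dom_subdiff_def is_argmin_on_def by blast
qed

lemma dom_subdiff_difference_quotients:
  fixes d :: "'a::euclidean_space \<Rightarrow> real"
  assumes Q: "compact Q" "convex Q" and cont: "continuous_on Q d" and cvx: "convex_on Q d"
    and z: "z \<in> Q" and v: "v \<in> Q"
  obtains y :: "nat \<Rightarrow> 'a" and e :: "nat \<Rightarrow> real"
  where "\<And>n. y n \<in> dom_subdiff Q d" "\<And>n. 0 < e n" "y \<longlonglongrightarrow> z"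
    "(\<lambda>n. (1 / e n) *\<^sub>R (y n - z)) \<longlonglongrightarrow> v - z"
proof -
  define e :: "nat \<Rightarrow> real" where "e n = inverse (real (Suc n))" for n
  have e: "0 < e n" "e n \<le> 1" for n
    by (auto simp: e_def field_simps)
  have "\<exists>y\<in>dom_subdiff Q d. norm (y - (z + e n *\<^sub>R (v - z))) < e n * e n" for n
  proof -
    have "z + e n *\<^sub>R (v - z) = e n *\<^sub>R v + (1 - e n) *\<^sub>R z"
      by (simp add: algebra_simps)
    then have "z + e n *\<^sub>R (v - z) \<in> Q"
      using Q(2) v z e[of n] unfolding convex_def by auto
    from dom_subdiff_approx[OF Q cont cvx this] e[of n] show ?thesis
      by (metis mult_pos_pos)
  qed
  then obtain y where y: "\<And>n. y n \<in> dom_subdiff Q d"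
    and y_close: "\<And>n. norm (y n - (z + e n *\<^sub>R (v - z))) < e n * e n"
    by metis
  define r where "r = (\<lambda>n. (1 / e n) *\<^sub>R (y n - z))"
  have e_lim: "e \<longlonglongrightarrow> 0"
    unfolding e_def by (rule LIMSEQ_inverse_real_of_nat)
  have r_lim: "r \<longlonglongrightarrow> v - z"
  proof (rule LIM_zero_cancel, rule Lim_null_comparison[OF _ e_lim])
    have "r n - (v - z) = (1 / e n) *\<^sub>R (y n - (z + e n *\<^sub>R (v - z)))" for n
      using e[of n] by (simp add: r_def algebra_simps)
    then have "norm (r n - (v - z)) = norm (y n - (z + e n *\<^sub>R (v - z))) / e n" for n
      using e[of n] by simp
    with y_close e show "\<forall>\<^sub>F n in sequentially. norm (r n - (v - z)) \<le> e n"
      by (simp add: pos_divide_le_eq less_imp_le)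
  qed
  have "y n = z + e n *\<^sub>R r n" for n
    using e(1)[of n] by (simp add: r_def)
  then have "y = (\<lambda>n. z + e n *\<^sub>R r n)"
    by (simp add: fun_eq_iff)
  then have "y \<longlonglongrightarrow> z"
    using tendsto_add[OF tendsto_const tendsto_scaleR[OF e_lim r_lim], of z] by simp
  with y e(1) r_lim show thesis
    unfolding r_def by (intro that)
qed

text \<open>First-order optimality of \<open>z\<close> in terms of the selection \<open>d'\<close>: at points \<open>y\<close> of \<open>Q\<^sup>o\<close>
  the subgradient inequality gives \<open>(c + L d' y) \<bullet> (y - z) \<ge> 0\<close>; dividing by \<open>e\<close> along the
  difference quotients towards \<open>v - z\<close>, continuity of \<open>d'\<close> passes to the limit.\<close>
lemma argmin_inner_plus_dgf_variational_ineq: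
  fixes d :: "'a::euclidean_space \<Rightarrow> real"
  assumes dgf: "dgf Q N d d'" and Q: "compact Q" "convex Q" and L: "0 < L"
    and z: "is_argmin_on Q (\<lambda>v. c \<bullet> v + L * d v) z" and v: "v \<in> Q"
  shows "0 \<le> (c + L *\<^sub>R d' z) \<bullet> (v - z)"
proof -
  have cont: "continuous_on Q d" and cvx: "convex_on Q d"
    and sub: "\<And>y. y \<in> dom_subdiff Q d \<Longrightarrow> subgrad_on Q d y (d' y)"
    and cont': "continuous_on (dom_subdiff Q d) d'"
    using dgf strongly_convex_on1_imp_convex_on[OF Q(2)] unfolding dgf_def by auto
  have zQ: "z \<in> Q" and zdom: "z \<in> dom_subdiff Q d"
    using z argmin_inner_plus_scaled_in_dom_subdiff[OF L z] unfolding is_argmin_on_def by auto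
  have mono: "0 \<le> (c + L *\<^sub>R d' y) \<bullet> (y - z)" if y: "y \<in> dom_subdiff Q d" for y
  proof -
    have "y \<in> Q"
      using y unfolding dom_subdiff_def by simp
    then have "c \<bullet> z + L * d z \<le> c \<bullet> y + L * d y"
      using z unfolding is_argmin_on_def by simp
    moreover have "L * (d y + d' y \<bullet> (z - y)) \<le> L * d z"
      using sub[OF y] zQ L unfolding subgrad_on_def by simp
    ultimately show ?thesis
      by (simp add: inner_add_left inner_diff_right algebra_simps)
  qed
  obtain y e where y: "\<And>n. y n \<in> dom_subdiff Q d" and e: "\<And>n. 0 < e n" and "y \<longlonglongrightarrow> z"
    and quot: "(\<lambda>n. (1 / e n) *\<^sub>R (y n - z)) \<longlonglongrightarrow> v - z"
    using dom_subdiff_difference_quotients[OF Q cont cvx zQ v] by blast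
  have "continuous (at z within dom_subdiff Q d) d'"
    using cont' zdom unfolding continuous_on_eq_continuous_within by blast
  from continuous_within_tendsto_compose'[OF this y \<open>y \<longlonglongrightarrow> z\<close>]
  have "(\<lambda>n. (c + L *\<^sub>R d' (y n)) \<bullet> ((1 / e n) *\<^sub>R (y n - z))) \<longlonglongrightarrow> (c + L *\<^sub>R d' z) \<bullet> (v - z)"
    by (intro tendsto_intros quot)
  moreover have "0 \<le> (c + L *\<^sub>R d' (y n)) \<bullet> ((1 / e n) *\<^sub>R (y n - z))" for n
    using mono[OF y] e[of n] by simp
  ultimately show ?thesis
    by (simp add: LIMSEQ_le_const)
qed

lemma argmin_inner_plus_dgf_bregman:
  fixes d :: "'a::euclidean_space \<Rightarrow> real"
  assumes "dgf Q N d d'" "compact Q" "convex Q" "0 < L"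
    and z: "is_argmin_on Q (\<lambda>v. c \<bullet> v + L * d v) z" and "v \<in> Q"
  shows "c \<bullet> z + L * d z + L * bregman d d' z v \<le> c \<bullet> v + L * d v"
  using argmin_inner_plus_dgf_variational_ineq[OF assms]
  by (simp add: bregman_def inner_add_left inner_diff_right algebra_simps)

lemma bregman_ge_half_sq:
  assumes dgf: "dgf Q N d d'" and Q: "convex Q" and z: "z \<in> dom_subdiff Q d" and v: "v \<in> Q"
  shows "1/2 * (N (v - z))^2 \<le> bregman d d' z v"
proof -
  let ?G = "\<lambda>w. (- d' z) \<bullet> w + (d' z \<bullet> z - d z)"
  have breg: "bregman d d' z = (\<lambda>w. ?G w + 1 * d w)"
    by (simp add: fun_eq_iff bregman_def inner_diff_right)
  have "subgrad_on Q d z (d' z)"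
    using dgf z unfolding dgf_def by blast
  with z have "is_argmin_on Q (\<lambda>w. ?G w + 1 * d w) z"
    unfolding breg[symmetric] subgrad_on_def is_argmin_on_def bregman_def dom_subdiff_def by auto
  then have "?G z + 1 * d z + 1 / 2 * (N (v - z))^2 \<le> ?G v + 1 * d v"
    using dgf v
    by (intro strongly_convex_argmin_growth[OF Q convex_on_inner_plus_const[OF Q]])
      (auto simp: dgf_def)
  then show ?thesis
    by (simp add: bregman_def inner_diff_right)
qed

section \<open>The smoothed saddle function\<close>

lemma phi_weighted_sum_le:
  assumes f2: "convex_on UNIV f2" and S: "finite S"
    and w: "\<And>k. k \<in> S \<Longrightarrow> 0 \<le> w k" and W: "sum w S = W" "0 < W"
  shows "(\<Sum>k\<in>S. w k * phi f1 f2 A v (y k)) \<le> W * phi f1 f2 A v (\<Sum>k\<in>S. (w k / W) *\<^sub>R y k)"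
proof -
  have "S \<noteq> {}"
    using W by auto
  moreover have "(\<Sum>k\<in>S. w k / W) = 1"
    using W by (simp flip: sum_divide_distrib)
  ultimately have "f2 (\<Sum>k\<in>S. (w k / W) *\<^sub>R y k) \<le> (\<Sum>k\<in>S. w k / W * f2 (y k))"
    using W w by (intro convex_on_sum[OF S _ f2]) auto
  then have "W * f2 (\<Sum>k\<in>S. (w k / W) *\<^sub>R y k) \<le> (\<Sum>k\<in>S. w k * f2 (y k))"
    using W by (simp add: pos_le_divide_eq mult.commute flip: sum_divide_distrib)
  moreover have "A v \<bullet> (\<Sum>k\<in>S. (w k / W) *\<^sub>R y k) * W = (\<Sum>k\<in>S. w k * (A v \<bullet> y k))"
    using W by (simp add: inner_sum_right sum_distrib_right)
  ultimately show ?thesis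
    using W by (simp add: phi_def sum.distrib sum_subtractf distrib_left right_diff_distrib
        sum_distrib_left[symmetric] algebra_simps)
qed

locale smoothed_saddle =
  fixes N1 :: "'a::euclidean_space \<Rightarrow> real" and N2 :: "'b::euclidean_space \<Rightarrow> real"
    and Q2 :: "'b set" and f1 :: "'a \<Rightarrow> real" and Df1 :: "'a \<Rightarrow> 'a" and f2 :: "'b \<Rightarrow> real"
    and A :: "'a \<Rightarrow> 'b" and M \<mu> :: real and d2 :: "'b \<Rightarrow> real" and d2' :: "'b \<Rightarrow> 'b"
    and ystar :: "'a \<Rightarrow> 'b"
  assumes N1: "is_norm N1" and N2: "is_norm N2" and Q2: "compact Q2" "convex Q2"
    and f1_cvx: "convex_on UNIV f1"
    and f1_grad: "\<And>v. (f1 has_derivative (\<lambda>h. Df1 v \<bullet> h)) (at v)"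
    and f1_lip: "\<And>v w. dual_norm N1 (Df1 v - Df1 w) \<le> M * N1 (v - w)"
    and f2_cvx: "convex_on UNIV f2" and A_lin: "linear A" and d2: "dgf Q2 N2 d2 d2'"
    and mu_pos: "0 < \<mu>"
    and ystar: "\<And>v. is_argmin_on Q2 (\<lambda>y. - (phi f1 f2 A v y - \<mu> * d2 y)) (ystar v)"
begin

abbreviation phi\<^sub>\<mu> :: "'a \<Rightarrow> real" where
  "phi\<^sub>\<mu> \<equiv> phimu f1 f2 A d2 Q2 \<mu>"

abbreviation grad :: "'a \<Rightarrow> 'a" where
  "grad v \<equiv> Df1 v + adjoint A (ystar v)"

lemma ystar_in: "ystar v \<in> Q2"
  using ystar[of v] unfolding is_argmin_on_def by simp

lemma phimu_eq: "phi\<^sub>\<mu> v = phi f1 f2 A v (ystar v) - \<mu> * d2 (ystar v)"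
  unfolding phimu_def using ystar[of v] unfolding is_argmin_on_def
  by (intro cSup_eq_maximum) auto

lemma phimu_ge: "y \<in> Q2 \<Longrightarrow> phi f1 f2 A v y - \<mu> * d2 y \<le> phi\<^sub>\<mu> v"
  using ystar[of v] unfolding phimu_eq is_argmin_on_def by auto

lemma inner_grad: "grad w \<bullet> h = Df1 w \<bullet> h + A h \<bullet> ystar w"
  by (simp add: inner_add_left inner_commute[of "adjoint A (ystar w)"] adjoint_works[OF A_lin])

lemma linearization_le_phi:
  "phi\<^sub>\<mu> w + grad w \<bullet> (v - w) \<le> phi f1 f2 A v (ystar w) - \<mu> * d2 (ystar w)"
  using convex_on_gradient_ineq[OF f1_cvx f1_grad, of w v]
  by (simp add: phimu_eq inner_grad phi_def linear_diff[OF A_lin] inner_diff_left)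

lemma linearization_le: "phi\<^sub>\<mu> w + grad w \<bullet> (v - w) \<le> phi\<^sub>\<mu> v"
  using linearization_le_phi phimu_ge[OF ystar_in] by (rule order_trans)

text \<open>The smoothed function has a Lipschitz gradient with constant \<open>M + \<parallel>A\<parallel>\<^sup>2/\<mu>\<close>: the
  \<open>\<mu>\<close>-strong concavity of the inner problem controls how far \<open>ystar\<close> moves.\<close>
lemma quadratic_upper_bound:
  "phi\<^sub>\<mu> u \<le> phi\<^sub>\<mu> x + grad x \<bullet> (u - x) + (M + (op_norm N1 N2 A)^2 / \<mu>) / 2 * (N1 (u - x))^2"
proof -
  let ?yx = "ystar x" and ?yu = "ystar u"
  let ?s = "N1 (u - x)" and ?r = "N2 (?yu - ?yx)" and ?op = "op_norm N1 N2 A"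
  have d2s: "strongly_convex_on1 Q2 N2 d2"
    using d2 unfolding dgf_def by simp
  have G: "convex_on Q2 (\<lambda>y. f2 y + ((- A x) \<bullet> y + (- f1 x)))"
    by (intro convex_on_add convex_on_subset[OF f2_cvx] convex_on_inner_plus_const Q2) auto
  have "is_argmin_on Q2 (\<lambda>y. (f2 y + ((- A x) \<bullet> y + (- f1 x))) + \<mu> * d2 y) ?yx"
    using ystar[of x] by (simp add: is_argmin_on_def phi_def algebra_simps)
  from strongly_convex_argmin_growth[OF Q2(2) G d2s less_imp_le[OF mu_pos] this ystar_in]
  have "phi f1 f2 A x ?yu - \<mu> * d2 ?yu + \<mu> / 2 * ?r^2 \<le> phi f1 f2 A x ?yx - \<mu> * d2 ?yx"
    by (simp add: phi_def algebra_simps)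
  moreover have "f1 u \<le> f1 x + Df1 x \<bullet> (u - x) + M / 2 * ?s^2"
    by (rule lipschitz_gradient_descent_ineq[OF N1 f1_grad f1_lip])
  moreover have "A (u - x) \<bullet> (?yu - ?yx) \<le> ?op * ?s * ?r"
    by (rule inner_le_op_norm[OF N1 N2 A_lin])
  moreover have "?op * ?s * ?r - \<mu> / 2 * ?r^2 \<le> ?op^2 / \<mu> / 2 * ?s^2"
  proof -
    have "0 \<le> (?op * ?s - \<mu> * ?r)^2 / (2 * \<mu>)"
      using mu_pos by simp
    also have "\<dots> = ?op^2 / \<mu> / 2 * ?s^2 - (?op * ?s * ?r - \<mu> / 2 * ?r^2)"
      using mu_pos by (simp add: power2_eq_square field_simps)
    finally show ?thesis
      by simp
  qed
  ultimately show ?thesis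
    unfolding phimu_eq inner_grad phi_def
    by (simp add: linear_diff[OF A_lin] inner_diff_left inner_diff_right algebra_simps
        add_divide_distrib)
qed

lemma bdd_above_d2: "bdd_above (d2 ` Q2)"
  using d2 Q2(1) unfolding dgf_def
  by (intro bounded_imp_bdd_above compact_imp_bounded compact_continuous_image) auto

lemma phibar_le: "phibar f1 f2 A Q2 v \<le> phi\<^sub>\<mu> v + \<mu> * Sup (d2 ` Q2)"
  unfolding phibar_def
proof (rule cSup_least)
  show "(\<lambda>y. phi f1 f2 A v y) ` Q2 \<noteq> {}"
    using ystar_in by blast
  fix r assume "r \<in> (\<lambda>y. phi f1 f2 A v y) ` Q2"
  then obtain y where y: "y \<in> Q2" "r = phi f1 f2 A v y"
    by blast
  have "\<mu> * d2 y \<le> \<mu> * Sup (d2 ` Q2)"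
    using cSup_upper[OF _ bdd_above_d2] y(1) mu_pos by simp
  with phimu_ge[OF y(1), of v] y(2) show "r \<le> phi\<^sub>\<mu> v + \<mu> * Sup (d2 ` Q2)"
    by linarith
qed

text \<open>Each linearisation at \<open>xs k\<close> lies below \<open>phi (\<cdot>) (ystar (xs k))\<close>, and \<open>phi\<close> is concave in
  its second argument, so the aggregated model is dominated by \<open>phi\<close> at the averaged dual point.\<close>
lemma gap_le_of_linear_model:
  fixes T :: nat and xs :: "nat \<Rightarrow> 'a"
  assumes w: "\<And>k. k \<le> T \<Longrightarrow> 0 \<le> w k" and W: "(\<Sum>k\<le>T. w k) = W" "0 < W"
    and Q1: "Q1 \<noteq> {}"
    and model: "\<And>v. v \<in> Q1 \<Longrightarrow>
      W * phi\<^sub>\<mu> p \<le> (\<Sum>k\<le>T. w k * (phi\<^sub>\<mu> (xs k) + grad (xs k) \<bullet> (v - xs k))) + R"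
  shows "phibar f1 f2 A Q2 p - phiunder f1 f2 A Q1 (\<Sum>k\<le>T. (w k / W) *\<^sub>R ystar (xs k))
    \<le> R / W + \<mu> * Sup (d2 ` Q2)"
proof -
  let ?y = "\<Sum>k\<le>T. (w k / W) *\<^sub>R ystar (xs k)"
  have "phi\<^sub>\<mu> p - R / W \<le> phiunder f1 f2 A Q1 ?y"
    unfolding phiunder_def
  proof (rule cInf_greatest)
    show "(\<lambda>v. phi f1 f2 A v ?y) ` Q1 \<noteq> {}"
      using Q1 by blast
    fix r assume "r \<in> (\<lambda>v. phi f1 f2 A v ?y) ` Q1"
    then obtain v where v: "v \<in> Q1" "r = phi f1 f2 A v ?y"
      by blast
    have "phi\<^sub>\<mu> (xs k) + grad (xs k) \<bullet> (v - xs k) \<le> phi f1 f2 A v (ystar (xs k))" for k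
    proof -
      have "0 \<le> \<mu> * d2 (ystar (xs k))"
        using d2 ystar_in mu_pos unfolding dgf_def by simp
      with linearization_le_phi[of "xs k" v] show ?thesis
        by linarith
    qed
    then have "(\<Sum>k\<le>T. w k * (phi\<^sub>\<mu> (xs k) + grad (xs k) \<bullet> (v - xs k)))
        \<le> (\<Sum>k\<le>T. w k * phi f1 f2 A v (ystar (xs k)))"
      using w by (intro sum_mono mult_left_mono) auto
    also have "\<dots> \<le> W * r"
      unfolding v(2) using w W by (intro phi_weighted_sum_le f2_cvx) auto
    finally have "W * phi\<^sub>\<mu> p \<le> W * r + R"
      using model[OF v(1)] by linarith
    with W(2) show "phi\<^sub>\<mu> p - R / W \<le> r"
      by (simp add: field_simps)
  qed
  with phibar_le[of p] show ?thesis
    by linarith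
qed

end

section \<open>The accelerated scheme\<close>

lemma is_argmin_on_add_const: "is_argmin_on Q (\<lambda>v. f v + k) z \<longleftrightarrow> is_argmin_on Q f z"
  by (simp add: is_argmin_on_def)

lemma dgf_argmin_growth:
  assumes "dgf Q N d d'" "convex Q" "is_argmin_on Q d z" "v \<in> Q"
  shows "1/2 * (N (v - z))^2 \<le> d v"
proof -
  have "d z = 0"
    using assms(1,3) unfolding dgf_def is_argmin_on_def by (metis order.antisym)
  have "is_argmin_on Q (\<lambda>w. 0 + 1 * d w) z"
    using assms(3) by simp
  from strongly_convex_argmin_growth[OF assms(2) _ _ _ this assms(4)] assms(1)
  show ?thesis
    using \<open>d z = 0\<close> by (simp add: convex_on_const assms(2) dgf_def)
qed

locale accelerated_scheme =
  fixes Q :: "'a::euclidean_space set" and N :: "'a \<Rightarrow> real" and d :: "'a \<Rightarrow> real"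
    and d' :: "'a \<Rightarrow> 'a" and F :: "'a \<Rightarrow> real" and g :: "'a \<Rightarrow> 'a" and Lmu :: real
    and T :: nat and x u z xh :: "nat \<Rightarrow> 'a" and L :: "nat \<Rightarrow> real"
  assumes N: "is_norm N" and Q: "compact Q" "convex Q" and dgf: "dgf Q N d d'"
    and F_lower: "\<And>v w. F w + g w \<bullet> (v - w) \<le> F v"
    and F_upper: "\<And>u v. F u \<le> F v + g v \<bullet> (u - v) + Lmu / 2 * (N (u - v))^2"
    and Lmu_pos: "0 < Lmu"
    and L0: "L 0 = Lmu"
    and x0: "is_argmin_on Q d (x 0)"
    and u0: "is_argmin_on Q (\<lambda>v. 1/2 * (F (x 0) + g (x 0) \<bullet> (v - x 0)) + L 0 * d v) (u 0)"
    and z0: "z 0 = u 0"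
    and x_step: "\<And>t. t \<le> T \<Longrightarrow>
       x (Suc t) = (2 / (real t + 3)) *\<^sub>R z t + (1 - 2 / (real t + 3)) *\<^sub>R u t"
    and xh_step: "\<And>t. t \<le> T \<Longrightarrow> is_argmin_on Q
       (\<lambda>v. (((real t + 2) / 2 / L t) *\<^sub>R g (x (Suc t))) \<bullet> (v - z t) + bregman d d' (z t) v)
       (xh (Suc t))"
    and u_step: "\<And>t. t \<le> T \<Longrightarrow>
       u (Suc t) = (2 / (real t + 3)) *\<^sub>R xh (Suc t) + (1 - 2 / (real t + 3)) *\<^sub>R u t"
    and L_step: "\<And>t. 1 \<le> t \<Longrightarrow> t \<le> T \<Longrightarrow> 0 < L t \<and> L t \<le> Lmu \<and>
       F (u t) \<le> F (x t) + g (x t) \<bullet> (u t - x t) + L t / 2 * (N (u t - x t))^2"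
    and z_step: "\<And>t. 1 \<le> t \<Longrightarrow> t \<le> T \<Longrightarrow> is_argmin_on Q
       (\<lambda>v. (\<Sum>k\<le>t. (real k + 1) / 2 * (F (x k) + g (x k) \<bullet> (v - x k))) + L t * d v) (z t)"
begin

definition estimate :: "nat \<Rightarrow> 'a \<Rightarrow> real" where
  "estimate t v = (\<Sum>k\<le>t. (real k + 1) / 2 * (F (x k) + g (x k) \<bullet> (v - x k))) + L t * d v"

definition weight_sum :: "nat \<Rightarrow> real" where
  "weight_sum t = (real t + 1) * (real t + 2) / 4"

definition chi :: "nat \<Rightarrow> real" where
  "chi t = (\<Sum>k<t. (L (Suc k) - L k) * (d (z (Suc k)) - 1/2 * (N (z k - xh (Suc k)))^2))"

lemma sum_weights: "(\<Sum>k\<le>t. (real k + 1) / 2) = weight_sum t"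
  by (induction t) (simp_all add: weight_sum_def field_simps)

lemma weight_div_weight_sum:
  "(real k + 1) / 2 / weight_sum t = 2 * (real k + 1) / ((real t + 1) * (real t + 2))"
  by (simp add: weight_sum_def field_split_simps)

lemma div_weight_sum_le:
  assumes "0 \<le> R"
  shows "R / weight_sum t \<le> 4 * R / (real t + 1)^2"
proof -
  have "R / weight_sum t = 4 * R / ((real t + 1) * (real t + 2))"
    by (simp add: weight_sum_def)
  also have "\<dots> \<le> 4 * R / ((real t + 1) * (real t + 1))"
    using assms by (intro divide_left_mono mult_left_mono) auto
  finally show ?thesis
    by (simp add: power2_eq_square)
qed

lemma L_bounds: "t \<le> T \<Longrightarrow> 0 < L t \<and> L t \<le> Lmu"
  using L_step[of t] L0 Lmu_pos by (cases t) auto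

lemma estimate_eq_linear:
  "estimate t v = (\<Sum>k\<le>t. ((real k + 1) / 2) *\<^sub>R g (x k)) \<bullet> v + L t * d v
    + (\<Sum>k\<le>t. (real k + 1) / 2 * (F (x k) - g (x k) \<bullet> x k))"
  by (simp add: estimate_def inner_sum_left inner_diff_right algebra_simps
      flip: sum.distrib sum_distrib_left)

lemma z_argmin: "t \<le> T \<Longrightarrow> is_argmin_on Q (estimate t) (z t)"
  using u0 z0 z_step[of t] unfolding estimate_def by (cases t) auto

lemma z_argmin_linear:
  "t \<le> T \<Longrightarrow> is_argmin_on Q (\<lambda>v. (\<Sum>k\<le>t. ((real k + 1) / 2) *\<^sub>R g (x k)) \<bullet> v + L t * d v) (z t)"
  using z_argmin[of t] unfolding estimate_eq_linear is_argmin_on_add_const .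

lemma z_in: "t \<le> T \<Longrightarrow> z t \<in> Q"
  using z_argmin unfolding is_argmin_on_def by blast

lemma xh_in: "t \<le> T \<Longrightarrow> xh (Suc t) \<in> Q"
  using xh_step unfolding is_argmin_on_def by blast

lemma u_in: "t \<le> Suc T \<Longrightarrow> u t \<in> Q"
proof (induction t)
  case 0
  then show ?case
    using u0 unfolding is_argmin_on_def by simp
next
  case (Suc t)
  then show ?case
    using u_step[of t] xh_in[of t] Q(2) unfolding convex_def by simp
qed

lemma z_in_dom_subdiff: "t \<le> T \<Longrightarrow> z t \<in> dom_subdiff Q d"
  using z_argmin_linear L_bounds by (blast intro: argmin_inner_plus_scaled_in_dom_subdiff)

lemma estimate_Suc:
  "estimate (Suc t) v = estimate t v + (real t + 2) / 2 * (F (x (Suc t)) + g (x (Suc t)) \<bullet> (v - x (Suc t)))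
    + (L (Suc t) - L t) * d v"
  by (simp add: estimate_def algebra_simps)

lemma estimate_bregman:
  assumes "t \<le> T" "v \<in> Q"
  shows "estimate t (z t) + L t * bregman d d' (z t) v \<le> estimate t v"
  using argmin_inner_plus_dgf_bregman[OF dgf Q _ z_argmin_linear[OF assms(1)] assms(2)]
    L_bounds[OF assms(1)]
  by (simp add: estimate_eq_linear)

text \<open>Optimality of \<open>xh (Suc t)\<close>, scaled by \<open>L t\<close>; its own Bregman distance is bounded below
  by strong convexity of \<open>d\<close>.\<close>
lemma prox_step:
  assumes t: "t \<le> T" and v: "v \<in> Q"
  shows "(real t + 2) / 2 * (g (x (Suc t)) \<bullet> (xh (Suc t) - z t)) + L t / 2 * (N (xh (Suc t) - z t))^2
    \<le> (real t + 2) / 2 * (g (x (Suc t)) \<bullet> (v - z t)) + L t * bregman d d' (z t) v"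
proof -
  let ?c = "((real t + 2) / 2 / L t) *\<^sub>R g (x (Suc t))"
  have L: "0 < L t"
    using L_bounds[OF t] by simp
  have "1/2 * (N (xh (Suc t) - z t))^2 \<le> bregman d d' (z t) (xh (Suc t))"
    by (rule bregman_ge_half_sq[OF dgf Q(2) z_in_dom_subdiff[OF t] xh_in[OF t]])
  moreover have "?c \<bullet> (xh (Suc t) - z t) + bregman d d' (z t) (xh (Suc t))
      \<le> ?c \<bullet> (v - z t) + bregman d d' (z t) v"
    using xh_step[OF t] v unfolding is_argmin_on_def by blast
  ultimately have "L t * (?c \<bullet> (xh (Suc t) - z t) + 1/2 * (N (xh (Suc t) - z t))^2)
      \<le> L t * (?c \<bullet> (v - z t) + bregman d d' (z t) v)"
    using L by (intro mult_left_mono) auto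
  moreover have "L t * (?c \<bullet> h) = (real t + 2) / 2 * (g (x (Suc t)) \<bullet> h)" for h
    using L by simp
  ultimately show ?thesis
    using L by (simp add: distrib_left)
qed

lemma step_weights:
  fixes t :: nat
  defines "\<tau> \<equiv> 2 / (real t + 3)"
  shows "weight_sum (Suc t) * \<tau> = (real t + 2) / 2" and "weight_sum (Suc t) * (1 - \<tau>) = weight_sum t"
    and "weight_sum (Suc t) * \<tau>^2 \<le> 1"
proof -
  show \<tau>: "weight_sum (Suc t) * \<tau> = (real t + 2) / 2"
    by (simp add: weight_sum_def \<tau>_def field_split_simps)
  show "weight_sum (Suc t) * (1 - \<tau>) = weight_sum t"
    by (simp add: weight_sum_def \<tau>_def field_split_simps)
  have "weight_sum (Suc t) * \<tau>^2 = (real t + 2) / 2 * \<tau>"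
    using \<tau> by (simp add: power2_eq_square mult.assoc[symmetric])
  also have "\<dots> \<le> 1"
    by (simp add: \<tau>_def field_split_simps)
  finally show "weight_sum (Suc t) * \<tau>^2 \<le> 1" .
qed

text \<open>The quadratic upper bound at \<open>u (Suc t)\<close>, split along
  \<open>u (Suc t) - x (Suc t) = \<tau> (xh (Suc t) - x (Suc t)) + (1 - \<tau>) (u t - x (Suc t)) = \<tau> (xh (Suc t) - z t)\<close>.\<close>
lemma descent_step_convex_comb:
  assumes t: "Suc t \<le> T"
  defines "\<tau> \<equiv> 2 / (real t + 3)"
  shows "F (u (Suc t)) \<le> \<tau> * (F (x (Suc t)) + g (x (Suc t)) \<bullet> (xh (Suc t) - x (Suc t)))
    + (1 - \<tau>) * F (u t) + L (Suc t) / 2 * (\<tau>^2 * (N (xh (Suc t) - z t))^2)"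
proof -
  let ?s = "Suc t"
  let ?g = "g (x ?s)" and ?n = "(N (xh ?s - z t))^2"
  have \<tau>: "0 \<le> \<tau>" "\<tau> \<le> 1"
    by (auto simp: \<tau>_def)
  have us: "u ?s = \<tau> *\<^sub>R xh ?s + (1 - \<tau>) *\<^sub>R u t"
    using u_step t by (simp add: \<tau>_def)
  have xs: "x ?s = \<tau> *\<^sub>R z t + (1 - \<tau>) *\<^sub>R u t"
    using x_step t by (simp add: \<tau>_def)
  have dist: "(N (u ?s - x ?s))^2 = \<tau>^2 * ?n"
    unfolding us xs using \<tau>
    by (simp add: is_norm_scaleR[OF N] power_mult_distrib flip: scaleR_diff_right)
  have split: "u ?s - x ?s = \<tau> *\<^sub>R (xh ?s - x ?s) + (1 - \<tau>) *\<^sub>R (u t - x ?s)"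
    unfolding us by (simp add: algebra_simps)
  have "F (x ?s) + ?g \<bullet> (u ?s - x ?s) + L ?s / 2 * (N (u ?s - x ?s))^2
      = \<tau> * (F (x ?s) + ?g \<bullet> (xh ?s - x ?s)) + (1 - \<tau>) * (F (x ?s) + ?g \<bullet> (u t - x ?s))
        + L ?s / 2 * (\<tau>^2 * ?n)"
    unfolding dist unfolding split by (simp add: inner_add_right algebra_simps)
  moreover have "F (u ?s) \<le> F (x ?s) + ?g \<bullet> (u ?s - x ?s) + L ?s / 2 * (N (u ?s - x ?s))^2"
    using L_step[of ?s] t by simp
  moreover have "(1 - \<tau>) * (F (x ?s) + ?g \<bullet> (u t - x ?s)) \<le> (1 - \<tau>) * F (u t)"
    using F_lower \<tau> by (intro mult_left_mono) auto
  ultimately show ?thesis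
    by linarith
qed

lemma descent_step:
  assumes t: "Suc t \<le> T"
  shows "weight_sum (Suc t) * F (u (Suc t))
    \<le> (real t + 2) / 2 * (F (x (Suc t)) + g (x (Suc t)) \<bullet> (xh (Suc t) - x (Suc t)))
      + weight_sum t * F (u t) + L (Suc t) / 2 * (N (xh (Suc t) - z t))^2"
proof -
  define \<tau> where "\<tau> = 2 / (real t + 3)"
  let ?s = "Suc t" and ?l = "F (x (Suc t)) + g (x (Suc t)) \<bullet> (xh (Suc t) - x (Suc t))"
  let ?n = "(N (xh ?s - z t))^2"
  have "weight_sum ?s * F (u ?s)
      \<le> weight_sum ?s * (\<tau> * ?l + (1 - \<tau>) * F (u t) + L ?s / 2 * (\<tau>^2 * ?n))"
    using descent_step_convex_comb[OF t] unfolding \<tau>_def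
    by (rule mult_left_mono) (simp add: weight_sum_def)
  also have "\<dots> = (weight_sum ?s * \<tau>) * ?l + (weight_sum ?s * (1 - \<tau>)) * F (u t)
      + (weight_sum ?s * \<tau>^2) * (L ?s / 2 * ?n)"
    by (simp add: algebra_simps)
  also have "\<dots> \<le> (real t + 2) / 2 * ?l + weight_sum t * F (u t) + L ?s / 2 * ?n"
  proof -
    have "(weight_sum ?s * \<tau>^2) * (L ?s / 2 * ?n) \<le> L ?s / 2 * ?n"
      using step_weights(3)[of t] L_bounds[OF t] unfolding \<tau>_def
      by (intro mult_left_le_one_le) (auto simp: weight_sum_def is_norm_nonneg)
    then show ?thesis
      unfolding \<tau>_def step_weights(1,2) by linarith
  qed
  finally show ?thesis .
qed

lemma estimate_sequence_base: "weight_sum 0 * F (u 0) \<le> estimate 0 (z 0)"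
proof -
  let ?n = "(N (u 0 - x 0))^2" and ?l = "F (x 0) + g (x 0) \<bullet> (u 0 - x 0)"
  have u0Q: "u 0 \<in> Q"
    using u_in by simp
  then have "1/2 * ?n \<le> d (u 0)" and "0 \<le> d (u 0)"
    using dgf_argmin_growth[OF dgf Q(2) x0] dgf unfolding dgf_def by simp_all
  then have quad: "1/2 * (Lmu / 2 * ?n) \<le> L 0 * d (u 0)"
    using Lmu_pos L0 by (simp add: mult_left_mono)
  have "weight_sum 0 * F (u 0) \<le> 1/2 * (?l + Lmu / 2 * ?n)"
    using F_upper[of "u 0" "x 0"] by (simp add: weight_sum_def)
  also have "\<dots> \<le> 1/2 * ?l + L 0 * d (u 0)"
    using quad by (simp only: distrib_left add_left_mono)
  also have "\<dots> = estimate 0 (z 0)"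
    by (simp add: estimate_def z0)
  finally show ?thesis .
qed

lemma estimate_sequence_step:
  assumes t: "Suc t \<le> T" and IH: "weight_sum t * F (u t) \<le> estimate t (z t) - chi t"
  shows "weight_sum (Suc t) * F (u (Suc t)) \<le> estimate (Suc t) (z (Suc t)) - chi (Suc t)"
proof -
  let ?s = "Suc t" and ?a = "(real t + 2) / 2" and ?g = "g (x (Suc t))"
  let ?n = "(N (xh ?s - z t))^2" and ?V = "bregman d d' (z t) (z ?s)"
  have zs: "z ?s \<in> Q"
    using z_in t by simp
  have "?a * (?g \<bullet> (xh ?s - z t)) + L t / 2 * ?n \<le> ?a * (?g \<bullet> (z ?s - z t)) + L t * ?V"
    using prox_step[OF _ zs] t by simp
  moreover have "estimate t (z t) + L t * ?V \<le> estimate t (z ?s)"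
    using estimate_bregman[OF _ zs] t by simp
  moreover have "chi ?s = chi t + (L ?s - L t) * d (z ?s) - L ?s / 2 * ?n + L t / 2 * ?n"
    by (simp add: chi_def is_norm_minus_commute[OF N, of "z t"] field_simps)
  moreover have "?a * (F (x ?s) + ?g \<bullet> (xh ?s - x ?s))
      = ?a * F (x ?s) + ?a * (?g \<bullet> (xh ?s - z t)) + ?a * (?g \<bullet> (z t - x ?s))"
    and "?a * (F (x ?s) + ?g \<bullet> (z ?s - x ?s))
      = ?a * F (x ?s) + ?a * (?g \<bullet> (z ?s - z t)) + ?a * (?g \<bullet> (z t - x ?s))"
    by (simp_all add: inner_diff_right algebra_simps)
  ultimately show ?thesis
    using descent_step[OF t] IH unfolding estimate_Suc by linarith
qed

lemma estimate_sequence: "t \<le> T \<Longrightarrow> weight_sum t * F (u t) \<le> estimate t (z t) - chi t"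
proof (induction t)
  case 0
  then show ?case
    using estimate_sequence_base by (simp add: chi_def)
next
  case (Suc t)
  then show ?case
    using estimate_sequence_step by simp
qed

lemma estimate_le_linear_model: "v \<in> Q \<Longrightarrow> estimate T v \<le>
    (\<Sum>k\<le>T. (real k + 1) / 2 * (F (x k) + g (x k) \<bullet> (v - x k))) + Lmu * Sup (d ` Q)"
proof -
  assume v: "v \<in> Q"
  have "bdd_above (d ` Q)"
    using dgf Q(1) unfolding dgf_def
    by (intro bounded_imp_bdd_above compact_imp_bounded compact_continuous_image) auto
  then have "d v \<le> Sup (d ` Q)"
    using v by (simp add: cSup_upper)
  moreover have "0 \<le> d v"
    using dgf v unfolding dgf_def by simp
  ultimately have "L T * d v \<le> Lmu * Sup (d ` Q)"
    using L_bounds[of T] by (intro mult_mono) auto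
  then show ?thesis
    by (simp add: estimate_def)
qed

lemma linear_model_bound:
  assumes "v \<in> Q"
  shows "weight_sum T * F (u T)
    \<le> (\<Sum>k\<le>T. (real k + 1) / 2 * (F (x k) + g (x k) \<bullet> (v - x k))) + (Lmu * Sup (d ` Q) - chi T)"
proof -
  have "estimate T (z T) \<le> estimate T v"
    using z_argmin[of T] assms unfolding is_argmin_on_def by simp
  with estimate_sequence[of T] estimate_le_linear_model[OF assms] show ?thesis
    by simp
qed

lemma linear_model_remainder_nonneg: "0 \<le> Lmu * Sup (d ` Q) - chi T"
proof -
  have uT: "u T \<in> Q"
    using u_in by simp
  have "(\<Sum>k\<le>T. (real k + 1) / 2 * (F (x k) + g (x k) \<bullet> (u T - x k)))
      \<le> (\<Sum>k\<le>T. (real k + 1) / 2 * F (u T))"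
    using F_lower by (intro sum_mono mult_left_mono) auto
  also have "\<dots> = weight_sum T * F (u T)"
    by (simp add: sum_distrib_right flip: sum_weights)
  finally show ?thesis
    using linear_model_bound[OF uT] by simp
qed

end

theorem theorem4:
  fixes Q1 :: "'a::euclidean_space set" and Q2 :: "'b::euclidean_space set"
    and N1 :: "'a \<Rightarrow> real" and N2 :: "'b \<Rightarrow> real"
    and f1 :: "'a \<Rightarrow> real" and Df1 :: "'a \<Rightarrow> 'a" and f2 :: "'b \<Rightarrow> real"
    and A :: "'a \<Rightarrow> 'b" and M \<mu> :: real
    and d1 :: "'a \<Rightarrow> real" and d1' :: "'a \<Rightarrow> 'a" and d2 :: "'b \<Rightarrow> real" and d2' :: "'b \<Rightarrow> 'b"
    and ystar :: "'a \<Rightarrow> 'b" and T :: nat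
    and x u z xh :: "nat \<Rightarrow> 'a" and L :: "nat \<Rightarrow> real"
  assumes N1: "is_norm N1" and N2: "is_norm N2"
    and Q1: "compact Q1" "convex Q1" and Q2: "compact Q2" "convex Q2"
    and f1_cvx: "convex_on UNIV f1"
    and f1_grad: "\<And>v. (f1 has_derivative (\<lambda>h. Df1 v \<bullet> h)) (at v)"
    and f1_lip: "\<And>v w. dual_norm N1 (Df1 v - Df1 w) \<le> M * N1 (v - w)"
    and M_pos: "M > 0"
    and f2_cvx: "convex_on UNIV f2"
    and f2_diff: "\<And>y. f2 differentiable (at y)"
    and A_lin: "linear A"
    and d1: "dgf Q1 N1 d1 d1'" and d2: "dgf Q2 N2 d2 d2'"
    and mu_pos: "\<mu> > 0"
    and ystar: "\<And>v. is_argmin_on Q2 (\<lambda>y. - (phi f1 f2 A v y - \<mu> * d2 y)) (ystar v)"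
  defines "g \<equiv> \<lambda>v. Df1 v + adjoint A (ystar v)"
    and "Lmu \<equiv> M + (op_norm N1 N2 A)^2 / \<mu>"
  assumes L0: "L 0 = Lmu"
    and x0: "is_argmin_on Q1 d1 (x 0)"
    and u0: "is_argmin_on Q1
       (\<lambda>v. 1/2 * (phimu f1 f2 A d2 Q2 \<mu> (x 0) + g (x 0) \<bullet> (v - x 0)) + L 0 * d1 v) (u 0)"
    and z0: "z 0 = u 0"
    and x_step: "\<And>t. t \<le> T \<Longrightarrow>
       x (Suc t) = (2 / (real t + 3)) *\<^sub>R z t + (1 - 2 / (real t + 3)) *\<^sub>R u t"
    and xh_step: "\<And>t. t \<le> T \<Longrightarrow> is_argmin_on Q1
       (\<lambda>v. (((real t + 2) / 2 / L t) *\<^sub>R g (x (Suc t))) \<bullet> (v - z t) + bregman d1 d1' (z t) v)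
       (xh (Suc t))"
    and u_step: "\<And>t. t \<le> T \<Longrightarrow>
       u (Suc t) = (2 / (real t + 3)) *\<^sub>R xh (Suc t) + (1 - 2 / (real t + 3)) *\<^sub>R u t"
    and L_step: "\<And>t. 1 \<le> t \<Longrightarrow> t \<le> T \<Longrightarrow> 0 < L t \<and> L t \<le> Lmu \<and>
       phimu f1 f2 A d2 Q2 \<mu> (u t) \<le> phimu f1 f2 A d2 Q2 \<mu> (x t) + g (x t) \<bullet> (u t - x t)
         + L t / 2 * (N1 (u t - x t))^2"
    and z_step: "\<And>t. 1 \<le> t \<Longrightarrow> t \<le> T \<Longrightarrow> is_argmin_on Q1
       (\<lambda>v. (\<Sum>k\<le>t. (real k + 1) / 2 * (phimu f1 f2 A d2 Q2 \<mu> (x k) + g (x k) \<bullet> (v - x k)))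
          + L t * d1 v) (z t)"
  shows "phibar f1 f2 A Q2 (u T)
           - phiunder f1 f2 A Q1 (\<Sum>t\<le>T. (2 * (real t + 1) / ((real T + 1) * (real T + 2))) *\<^sub>R ystar (x t))
         \<le> 4 * (Sup (d1 ` Q1) * (op_norm N1 N2 A)^2 / \<mu> + Sup (d1 ` Q1) * M
                 - (\<Sum>t<T. (L (Suc t) - L t) * (d1 (z (Suc t)) - 1/2 * (N1 (z t - xh (Suc t)))^2)))
             / (real T + 1)^2
           + \<mu> * Sup (d2 ` Q2)"
proof -
  interpret saddle: smoothed_saddle N1 N2 Q2 f1 Df1 f2 A M \<mu> d2 d2' ystar
    by (rule smoothed_saddle.intro) (fact assms)+
  have Lmu_pos: "0 < Lmu"
    unfolding Lmu_def using M_pos mu_pos by (simp add: add_pos_nonneg)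
  interpret scheme: accelerated_scheme Q1 N1 d1 d1' "phimu f1 f2 A d2 Q2 \<mu>" saddle.grad Lmu T x u z xh L
    using N1 Q1 d1 saddle.linearization_le saddle.quadratic_upper_bound Lmu_pos L0 x0 u0 z0
      x_step xh_step u_step L_step z_step
    unfolding g_def Lmu_def by (intro accelerated_scheme.intro) simp_all
  define R where "R = Lmu * Sup (d1 ` Q1) - scheme.chi T"
  have W: "0 < scheme.weight_sum T"
    by (simp add: scheme.weight_sum_def)
  have "Q1 \<noteq> {}"
    using x0 unfolding is_argmin_on_def by blast
  then have gap: "phibar f1 f2 A Q2 (u T)
      - phiunder f1 f2 A Q1 (\<Sum>k\<le>T. ((real k + 1) / 2 / scheme.weight_sum T) *\<^sub>R ystar (x k))
      \<le> R / scheme.weight_sum T + \<mu> * Sup (d2 ` Q2)"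
    using W scheme.linear_model_bound unfolding R_def
    by (intro saddle.gap_le_of_linear_model) (auto simp: scheme.sum_weights)
  moreover have "R / scheme.weight_sum T \<le> 4 * R / (real T + 1)^2"
    using scheme.linear_model_remainder_nonneg unfolding R_def by (rule scheme.div_weight_sum_le)
  ultimately show ?thesis
    unfolding R_def scheme.chi_def Lmu_def scheme.weight_div_weight_sum by (simp add: algebra_simps)
qed

end
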